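(* (a) An integer $k\ge1$ is a local minimum of the sequence $(p(m))_{m\ge0}$ if and only if $k$ is a positive multiple of $4$. (b) Let $a_j=p(4j)$ for $j\ge0$ be the sequence of negligibility values at the multiples of $4$. An integer $j\ge1$ is a local minimum of $(a_j)_{j\ge0}$ if and only if $j$ is a positive multiple of $4$; that is, the minima among the negligibility minima occur exactly at the integers $16l$, $l\ge1$.
   Context: Every integer $m\ge 0$ is written in binary as $m=\sum_{k\ge1} m_k 2^{k-1}$ with $m_k\in\{0,1\}$. The negligibility is $p(m)=\sum_k (k+1)m_k$. For a real sequence $(a_m)_{m\ge0}$, an index $k\ge1$ is a local minimum if $a_{k-1}>a_k<a_{k+1}$. *)

theory Defs
  imports Complex_Main
begin

text \<open>Negligibility: writing m = sum over k>=1 of m_k 2^(k-1), p(m) = sum_k (k+1) m_k.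
  Bit k-1 of m is bit m (k-1); with i = k-1 the weight is i+2. All bits of index >= m vanish.\<close>
definition negligibility :: "nat \<Rightarrow> nat" where
  "negligibility m = (\<Sum>i<m. if bit m i then i + 2 else 0)"

definition local_min :: "(nat \<Rightarrow> real) \<Rightarrow> nat \<Rightarrow> bool" where
  "local_min a k \<longleftrightarrow> k \<ge> 1 \<and> a (k - 1) > a k \<and> a k < a (k + 1)"

end

theory Submission
  imports Defs
begin

text \<open>Let w_c(m) be the sum of i + c over the set bits i of m. Then p = w_2 and, since
  multiplying by 4 shifts all bits up by two, p(4m) = w_4(m). For any c \<ge> 2 the local minima
  of w_c are exactly the positive multiples of 4: at odd k the value rises by c from k - 1;
  from 4s+1 to 4s+2 it rises by 1; and at 4t the value drops below that at 4t - 1 (which ends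
  in the bits 11) by at least c - 1, because one step of w_{c+2} increases it by at most c + 2.\<close>

fun weighted_bit_sum :: "nat \<Rightarrow> nat \<Rightarrow> nat" where
  "weighted_bit_sum c n =
     (if n = 0 then 0 else (if odd n then c else 0) + weighted_bit_sum (c + 1) (n div 2))"

declare weighted_bit_sum.simps [simp del]

lemma weighted_bit_sum_0 [simp]: "weighted_bit_sum c 0 = 0"
  by (simp add: weighted_bit_sum.simps)

lemma weighted_bit_sum_double: "weighted_bit_sum c (2 * n) = weighted_bit_sum (c + 1) n"
  by (cases "n = 0") (simp_all add: weighted_bit_sum.simps [of c "2 * n"])

lemma weighted_bit_sum_Suc_double:
  "weighted_bit_sum c (Suc (2 * n)) = c + weighted_bit_sum (c + 1) n"
  by (simp add: weighted_bit_sum.simps [of c "Suc (2 * n)"])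

lemma weighted_bit_sum_Suc_even: "weighted_bit_sum c (Suc (2 * n)) = c + weighted_bit_sum c (2 * n)"
  by (simp add: weighted_bit_sum_Suc_double weighted_bit_sum_double)

lemma not_bit_nat_ge:
  assumes "m \<le> i"
  shows "\<not> bit (m::nat) i"
proof -
  have "m < 2 ^ i"
    using assms less_exp [of i] by linarith
  thus ?thesis by (simp add: bit_nat_def)
qed

lemma sum_bits_lessThan_extend:
  assumes "m \<le> N"
  shows "(\<Sum>i<N. if bit m i then f i else (0::nat)) = (\<Sum>i<m. if bit m i then f i else 0)"
  using assms by (intro sum.mono_neutral_right) (auto simp: not_bit_nat_ge)

lemma sum_bits_eq_weighted_bit_sum:
  "(\<Sum>i<n. if bit n i then i + c else 0) = weighted_bit_sum c n"
proof (induction n arbitrary: c rule: less_induct)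
  case (less n)
  show ?case
  proof (cases "n = 0")
    case False
    then obtain n' where Suc: "n = Suc n'"
      using not0_implies_Suc by blast
    have "(\<Sum>i<n. if bit n i then i + c else 0)
        = (if bit n 0 then c else 0) + (\<Sum>i<n'. if bit n (Suc i) then Suc i + c else 0)"
      by (simp only: Suc sum.lessThan_Suc_shift add_0)
    also have "(\<Sum>i<n'. if bit n (Suc i) then Suc i + c else 0)
        = (\<Sum>i<n'. if bit (n div 2) i then i + (c + 1) else 0)"
      by (auto simp: bit_Suc intro!: sum.cong)
    also have "\<dots> = (\<Sum>i<n div 2. if bit (n div 2) i then i + (c + 1) else 0)"
      using Suc by (intro sum_bits_lessThan_extend) auto
    also have "\<dots> = weighted_bit_sum (c + 1) (n div 2)"
      using less Suc by simp
    finally show ?thesis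
      using False by (simp add: weighted_bit_sum.simps [of c n] bit_0)
  qed simp
qed

lemma negligibility_eq_weighted_bit_sum: "negligibility m = weighted_bit_sum 2 m"
  using sum_bits_eq_weighted_bit_sum [of m 2] by (simp add: negligibility_def add.commute)

lemma negligibility_mult_4: "negligibility (4 * m) = weighted_bit_sum 4 m"
  using weighted_bit_sum_double [of 2 "2 * m"] weighted_bit_sum_double [of 3 m]
  by (simp add: negligibility_eq_weighted_bit_sum)

lemma weighted_bit_sum_le_pred:
  assumes "t \<ge> 1" "c \<ge> 1"
  shows "weighted_bit_sum c t \<le> weighted_bit_sum c (t - 1) + c"
  using assms
proof (induction t arbitrary: c rule: less_induct)
  case (less t)
  show ?case
  proof (cases "even t")
    case False
    then obtain s where "t = Suc (2 * s)"
      by (metis oddE add.commute plus_1_eq_Suc)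
    thus ?thesis by (simp add: weighted_bit_sum_Suc_even)
  next
    case True
    then obtain s where t: "t = 2 * Suc s"
      using less.prems by (metis evenE not0_implies_Suc mult_0_right not_one_le_zero)
    have pred: "weighted_bit_sum c (t - 1) = c + weighted_bit_sum (c + 1) s"
      using weighted_bit_sum_Suc_double [of c s] by (simp add: t)
    have "weighted_bit_sum c t = weighted_bit_sum (c + 1) (Suc s)"
      using weighted_bit_sum_double [of c "Suc s"] by (simp only: t)
    also have "\<dots> \<le> weighted_bit_sum (c + 1) s + (c + 1)"
      using less.IH [of "Suc s" "c + 1"] t by simp
    also have "\<dots> \<le> weighted_bit_sum c (t - 1) + c"
      using pred less.prems by simp
    finally show ?thesis .
  qed
qed

lemma weighted_bit_sum_4_mult_add_2:
  "weighted_bit_sum c (4 * s + 2) = Suc (weighted_bit_sum c (4 * s + 1))"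
  using weighted_bit_sum_Suc_double [of "c + 1" s] weighted_bit_sum_double [of c "Suc (2 * s)"]
    weighted_bit_sum_Suc_double [of c "2 * s"] weighted_bit_sum_double [of "c + 1" s]
  by (simp add: mult.assoc)

lemma weighted_bit_sum_4_mult_less_pred:
  assumes "c \<ge> 2" "t \<ge> 1"
  shows "weighted_bit_sum c (4 * t) < weighted_bit_sum c (4 * t - 1)"
proof -
  obtain s where t: "t = Suc s"
    using assms(2) by (cases t) auto
  have "4 * t - 1 = Suc (2 * Suc (2 * s))"
    by (simp add: t)
  hence pred: "weighted_bit_sum c (4 * t - 1) = c + (c + 1) + weighted_bit_sum (c + 2) s"
    using weighted_bit_sum_Suc_double [of c "Suc (2 * s)"] weighted_bit_sum_Suc_double [of "c + 1" s]
    by simp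
  have "weighted_bit_sum c (4 * t) = weighted_bit_sum (c + 2) t"
    using weighted_bit_sum_double [of c "2 * t"] weighted_bit_sum_double [of "c + 1" t] by simp
  also have "\<dots> \<le> weighted_bit_sum (c + 2) s + (c + 2)"
    using weighted_bit_sum_le_pred [of t "c + 2"] by (simp add: t)
  finally show ?thesis
    using assms(1) pred by simp
qed

lemma local_min_weighted_bit_sum_iff:
  assumes "c \<ge> 2" "k \<ge> 1"
  shows "local_min (\<lambda>m. real (weighted_bit_sum c m)) k \<longleftrightarrow> 4 dvd k"
proof -
  consider (odd) n where "k = Suc (2 * n)" | (two) s where "k = 4 * s + 2"
    | (four) t where "k = 4 * t" "t \<ge> 1"
  proof -
    have "odd k \<or> k mod 4 = 2 \<or> 4 dvd k" by presburger
    moreover have "odd k \<Longrightarrow> k = Suc (2 * (k div 2))" by presburger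
    moreover have "k mod 4 = 2 \<Longrightarrow> k = 4 * (k div 4) + 2" by presburger
    moreover have "4 dvd k \<Longrightarrow> k = 4 * (k div 4) \<and> k div 4 \<ge> 1" using assms(2) by auto
    ultimately show thesis using that by blast
  qed
  then show ?thesis
  proof cases
    case odd
    then have "\<not> 4 dvd k"
      by presburger
    then show ?thesis
      using odd weighted_bit_sum_Suc_even [of c n] by (auto simp: local_min_def)
  next
    case two
    then have "\<not> 4 dvd k"
      by presburger
    then show ?thesis
      using two weighted_bit_sum_4_mult_add_2 [of c s] by (auto simp: local_min_def)
  next
    case four
    have "weighted_bit_sum c (4 * t + 1) = c + weighted_bit_sum c (4 * t)"
      using weighted_bit_sum_Suc_even [of c "2 * t"] by simp
    then show ?thesis
      using four assms weighted_bit_sum_4_mult_less_pred [of c t] by (simp add: local_min_def)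
  qed
qed

theorem theorem3:
  shows "(\<forall>k::nat. k \<ge> 1 \<longrightarrow>
            (local_min (\<lambda>m. real (negligibility m)) k \<longleftrightarrow> 4 dvd k))
       \<and> (\<forall>j::nat. j \<ge> 1 \<longrightarrow>
            (local_min (\<lambda>i. real (negligibility (4 * i))) j \<longleftrightarrow> 4 dvd j))"
  unfolding negligibility_mult_4 unfolding negligibility_eq_weighted_bit_sum
  using local_min_weighted_bit_sum_iff [of 2] local_min_weighted_bit_sum_iff [of 4] by simp

end
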